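(* Let $R$ be an integral domain, let $\mathbb{F}$ be a field containing $R$ in which the polynomials below split, and let $h,y\in R$ be nonzero. Let $a=(a_n)_{n\ge 0}$ be a linear recurrent sequence over $R$ of degree $r$ with characteristic polynomial $$f(t)=t^r+\sum_{i=1}^r(-1)^i\sigma_i t^{r-i}\in R[t],$$ whose zeros in $\mathbb{F}$ (with multiplicity) are $\alpha_1,\ldots,\alpha_r$, so that $\sigma_i$ is the $i$-th elementary symmetric function of $\alpha_1,\dots,\alpha_r$. Let $b=L^{(h,y)}(a)$, i.e. $b_n=\sum_{i=0}^n\binom{n}{i}h^iy^{n-i}a_i$. Then $b$ is a linear recurrent sequence of degree $r$ whose characteristic polynomial $g(t)$ has zeros $h\alpha_1+y,\ldots,h\alpha_r+y$. Moreover $$g(t)=t^r+\sum_{i=1}^r(-1)^i\overline{\sigma_i}\,t^{r-i},\qquad \overline{\sigma_i}=\sum_{k=0}^{i}\binom{r-k}{i-k}h^k y^{i-k}\sigma_k\quad (i=1,\ldots,r),$$ with the convention $\sigma_0=1$.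
   Context: A linear recurrent sequence of degree $r$ over $R$ with characteristic polynomial $f(t)=t^r-c_1t^{r-1}-\dots-c_r$ is a sequence $(a_n)_{n\ge0}$ in $R$ with $a_{n+r}=c_1a_{n+r-1}+\dots+c_ra_n$ for all $n\ge 0$. For $h,y\in R$ the generalized Binomial interpolated operator $L^{(h,y)}$ sends a sequence $a=(a_n)_{n\ge0}$ to the sequence $b$ with $b_n=\sum_{i=0}^n\binom{n}{i}h^iy^{n-i}a_i$ (in the paper it is introduced for nonzero $h,y$). *)

theory Defs
  imports "HOL-Computational_Algebra.Polynomial"
begin

text \<open>R is modelled as a subring of the ambient field 'a (the field F containing R).\<close>
definition subring_of :: "'a::field set \<Rightarrow> bool" where
  "subring_of R \<longleftrightarrow> 0 \<in> R \<and> 1 \<in> R \<and>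
     (\<forall>x\<in>R. \<forall>z\<in>R. x + z \<in> R \<and> x - z \<in> R \<and> x * z \<in> R)"

definition lrs_charpoly :: "'a::comm_ring_1 poly \<Rightarrow> (nat \<Rightarrow> 'a) \<Rightarrow> bool" where
  "lrs_charpoly f a \<longleftrightarrow> (\<exists>r c. f = monom 1 r - (\<Sum>i=1..r. monom (c i) (r - i)) \<and>
      (\<forall>n. a (n + r) = (\<Sum>i=1..r. c i * a (n + r - i))))"

definition binom_interp :: "'a::comm_ring_1 \<Rightarrow> 'a \<Rightarrow> (nat \<Rightarrow> 'a) \<Rightarrow> nat \<Rightarrow> 'a" where
  "binom_interp h y a n = (\<Sum>i=0..n. of_nat (n choose i) * h ^ i * y ^ (n - i) * a i)"

end

theory Submission
  imports Defs
begin

text \<open>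
  Let \<open>E\<close> be the shift operator on sequences and \<open>q = hE + y\<close>. Then
  \<open>b\<^sub>m = (q\<^sup>m a)\<^sub>0\<close>, so \<open>(g(E) b)\<^sub>n = (q\<^sup>n \<cdot> g(q) a)\<^sub>0\<close> for every polynomial \<open>g\<close>.
  For \<open>g(t) = h\<^sup>r f((t - y)/h)\<close> we have \<open>g(q) = h\<^sup>r f(E)\<close>, which annihilates \<open>a\<close>;
  hence \<open>g(E)\<close> annihilates \<open>b\<close>. The roots of \<open>g\<close> are visibly \<open>h\<alpha>\<^sub>j + y\<close>, and expanding
  \<open>g(t) = \<Sum>\<^sub>k (-1)\<^sup>k \<sigma>\<^sub>k h\<^sup>k (t - y)\<^sup>r\<^sup>-\<^sup>k\<close> by the binomial theorem gives the coefficients.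
\<close>

text \<open>\<open>shift_eval p a n\<close> is \<open>(p(E) a)\<^sub>n\<close>, where \<open>(E a)\<^sub>n = a\<^sub>n\<^sub>+\<^sub>1\<close>.\<close>
definition shift_eval :: "'a::comm_ring_1 poly \<Rightarrow> (nat \<Rightarrow> 'a) \<Rightarrow> nat \<Rightarrow> 'a" where
  "shift_eval p a n = (\<Sum>k\<le>degree p. coeff p k * a (n + k))"

lemma shift_eval_bound:
  "degree p < N \<Longrightarrow> shift_eval p a n = (\<Sum>k<N. coeff p k * a (n + k))"
  unfolding shift_eval_def lessThan_Suc_atMost [symmetric]
  by (rule sum.mono_neutral_left) (auto simp: coeff_eq_0)

lemma shift_eval_0 [simp]: "shift_eval 0 a n = 0"
  by (simp add: shift_eval_def)

lemma shift_eval_zero_seq [simp]: "shift_eval p (\<lambda>_. 0) n = 0"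
  by (simp add: shift_eval_def)

lemma shift_eval_add: "shift_eval (p + q) a n = shift_eval p a n + shift_eval q a n"
proof -
  let ?N = "Suc (degree p + degree q)"
  have "degree (p + q) < ?N" "degree p < ?N" "degree q < ?N"
    using degree_add_le_max[of p q] by linarith+
  then show ?thesis
    by (simp add: shift_eval_bound[of _ ?N] sum.distrib algebra_simps)
qed

lemma shift_eval_diff: "shift_eval (p - q) a n = shift_eval p a n - shift_eval q a n"
proof -
  let ?N = "Suc (degree p + degree q)"
  have "degree (p - q) < ?N" "degree p < ?N" "degree q < ?N"
    using degree_diff_le_max[of p q] by linarith+
  then show ?thesis
    by (simp add: shift_eval_bound[of _ ?N] sum_subtractf algebra_simps)
qed

lemma shift_eval_smult: "shift_eval (smult c p) a n = c * shift_eval p a n"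
proof -
  have "degree (smult c p) < Suc (degree p)"
    using degree_smult_le[of c p] by linarith
  then show ?thesis
    by (simp add: shift_eval_bound[of _ "Suc (degree p)"] sum_distrib_left algebra_simps)
qed

lemma shift_eval_sum: "shift_eval (\<Sum>i\<in>A. f i) a n = (\<Sum>i\<in>A. shift_eval (f i) a n)"
  by (induction A rule: infinite_finite_induct) (auto simp: shift_eval_add)

lemma shift_eval_monom: "shift_eval (monom c k) a n = c * a (n + k)"
  by (simp add: shift_eval_bound[of _ "Suc k"] degree_monom_le le_imp_less_Suc coeff_monom)

lemma shift_eval_pCons: "shift_eval (pCons c p) a n = c * a n + shift_eval p a (Suc n)"
proof -
  let ?N = "Suc (degree p)"
  have "degree (pCons c p) < Suc ?N"
    by (simp add: degree_pCons_le le_imp_less_Suc)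
  then have "shift_eval (pCons c p) a n = (\<Sum>k<Suc ?N. coeff (pCons c p) k * a (n + k))"
    by (rule shift_eval_bound)
  also have "\<dots> = c * a n + (\<Sum>k<?N. coeff p k * a (Suc n + k))"
    by (subst sum.lessThan_Suc_shift) simp
  finally show ?thesis
    by (simp add: shift_eval_bound[of p ?N])
qed

lemma shift_eval_mult: "shift_eval (p * q) a n = shift_eval p (shift_eval q a) n"
proof (induction p arbitrary: n rule: pCons_induct)
  case (pCons c p)
  have "pCons c p * q = smult c q + pCons 0 (p * q)" by simp
  then show ?case
    by (simp add: shift_eval_add shift_eval_smult shift_eval_pCons pCons.IH)
qed simp

lemma shift_eval_pcompose:
  "shift_eval p (\<lambda>m. shift_eval (q ^ m) a 0) n = shift_eval (q ^ n * pcompose p q) a 0"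
proof (induction p arbitrary: n rule: pCons_induct)
  case (pCons c p)
  have "q ^ n * pcompose (pCons c p) q = smult c (q ^ n) + q ^ Suc n * pcompose p q"
    by (simp add: pcompose_pCons algebra_simps)
  then show ?case
    by (simp add: shift_eval_add shift_eval_smult shift_eval_pCons pCons.IH)
qed simp

lemma lrs_charpoly_imp_shift_eval_eq_0:
  assumes "lrs_charpoly f a"
  shows "shift_eval f a n = 0"
proof -
  obtain r c where f: "f = monom 1 r - (\<Sum>i=1..r. monom (c i) (r - i))"
    and rec: "\<And>n. a (n + r) = (\<Sum>i=1..r. c i * a (n + r - i))"
    using assms unfolding lrs_charpoly_def by blast
  have "(\<Sum>i=1..r. c i * a (n + (r - i))) = (\<Sum>i=1..r. c i * a (n + r - i))"
    by (intro sum.cong) auto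
  then show ?thesis
    by (simp add: f rec shift_eval_diff shift_eval_sum shift_eval_monom)
qed

lemma lrs_charpolyI:
  assumes "\<And>n. shift_eval (monom 1 r + (\<Sum>i=1..r. monom (d i) (r - i))) a n = 0"
  shows "lrs_charpoly (monom 1 r + (\<Sum>i=1..r. monom (d i) (r - i))) a"
  unfolding lrs_charpoly_def
proof (intro exI conjI allI)
  show "monom 1 r + (\<Sum>i=1..r. monom (d i) (r - i)) = monom 1 r - (\<Sum>i=1..r. monom (- d i) (r - i))"
    by (simp add: sum_negf flip: minus_monom)
  fix n
  have "(\<Sum>i=1..r. d i * a (n + (r - i))) = (\<Sum>i=1..r. d i * a (n + r - i))"
    by (intro sum.cong) auto
  then have "a (n + r) + (\<Sum>i=1..r. d i * a (n + r - i)) = 0"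
    using assms[of n] by (simp add: shift_eval_add shift_eval_sum shift_eval_monom)
  then show "a (n + r) = (\<Sum>i=1..r. - d i * a (n + r - i))"
    by (simp add: sum_negf eq_neg_iff_add_eq_0)
qed

lemma pCons_power_eq_sum_monom:
  "[:c, d:] ^ m = (\<Sum>i=0..m. monom (of_nat (m choose i) * d ^ i * c ^ (m - i)) i)"
proof -
  have "[:c, d:] = monom d 1 + [:c:]" by (simp add: monom_Suc monom_0)
  then have "[:c, d:] ^ m = (\<Sum>i\<le>m. of_nat (m choose i) * monom d 1 ^ i * [:c:] ^ (m - i))"
    by (simp add: binomial_ring)
  also have "\<dots> = (\<Sum>i\<le>m. monom (of_nat (m choose i)) 0 * monom (d ^ i) i * monom (c ^ (m - i)) 0)"
    by (simp add: monom_power of_nat_poly flip: monom_0)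
  finally show ?thesis by (simp add: mult_monom atMost_atLeast0)
qed

lemma binom_interp_eq_shift_eval: "binom_interp h y a m = shift_eval ([:y, h:] ^ m) a 0"
  by (simp add: pCons_power_eq_sum_monom shift_eval_sum shift_eval_monom binom_interp_def)

lemma shift_eval_binom_interp_eq_0:
  assumes "\<And>n. shift_eval f a n = 0"
    and "pcompose g [:y, h:] = smult c f"
  shows "shift_eval g (binom_interp h y a) n = 0"
proof -
  have "binom_interp h y a = (\<lambda>m. shift_eval ([:y, h:] ^ m) a 0)"
    by (rule ext) (rule binom_interp_eq_shift_eval)
  then have "shift_eval g (binom_interp h y a) n = shift_eval ([:y, h:] ^ n * pcompose g [:y, h:]) a 0"
    by (simp add: shift_eval_pcompose)
  also have "\<dots> = c * shift_eval ([:y, h:] ^ n) (shift_eval f a) 0"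
    by (simp add: assms(2) shift_eval_mult shift_eval_smult)
  also have "shift_eval f a = (\<lambda>_. 0)"
    using assms(1) by auto
  finally show ?thesis by simp
qed

lemma smult_sum_right: "smult c (\<Sum>i\<in>A. f i) = (\<Sum>i\<in>A. smult c (f i))"
  by (induction A rule: infinite_finite_induct) (simp_all add: smult_add_right)

lemma sum_triangle_swap:
  fixes F :: "nat \<Rightarrow> nat \<Rightarrow> 'b::comm_monoid_add"
  shows "(\<Sum>i=0..r. \<Sum>k=0..i. F i k) = (\<Sum>k=0..r. \<Sum>i=k..r. F i k)"
proof -
  have "(\<Sum>i=0..r. \<Sum>k=0..i. F i k) = (\<Sum>i=0..r. \<Sum>k\<in>{k. k \<in> {0..r} \<and> k \<le> i}. F i k)"
    by (intro sum.cong) auto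
  also have "\<dots> = (\<Sum>k=0..r. \<Sum>i\<in>{i. i \<in> {0..r} \<and> k \<le> i}. F i k)"
    by (rule sum.swap_restrict) auto
  also have "\<dots> = (\<Sum>k=0..r. \<Sum>i=k..r. F i k)"
    by (intro sum.cong) auto
  finally show ?thesis .
qed

lemma sum_smult_linear_power:
  fixes c :: "nat \<Rightarrow> 'a::comm_ring_1"
  shows "(\<Sum>k=0..r. smult (c k) ([:y, 1:] ^ (r - k)))
       = (\<Sum>i=0..r. monom (\<Sum>k=0..i. of_nat ((r - k) choose (i - k)) * y ^ (i - k) * c k) (r - i))"
proof -
  have "smult (c k) ([:y, 1:] ^ (r - k))
      = (\<Sum>i=k..r. monom (of_nat ((r - k) choose (i - k)) * y ^ (i - k) * c k) (r - i))"
    if "k \<le> r" for k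
  proof -
    have "smult (c k) ([:y, 1:] ^ (r - k))
        = (\<Sum>j=0..r-k. monom (c k * of_nat ((r - k) choose j) * y ^ (r - k - j)) j)"
      by (simp add: pCons_power_eq_sum_monom smult_sum_right smult_monom mult.assoc)
    also have "\<dots> = (\<Sum>i=k..r. monom (of_nat ((r - k) choose (i - k)) * y ^ (i - k) * c k) (r - i))"
    proof (rule sum.reindex_bij_witness[where i = "\<lambda>i. r - i" and j = "\<lambda>j. r - j"])
      fix j assume "j \<in> {0..r-k}"
      then have "(r - k) choose (r - j - k) = (r - k) choose j"
        and "r - j - k = r - k - j" and "r - (r - j) = j"
        using binomial_symmetric[of j "r - k"] that by (auto simp: add.commute)
      then show "monom (of_nat ((r - k) choose (r - j - k)) * y ^ (r - j - k) * c k) (r - (r - j))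
          = monom (c k * of_nat ((r - k) choose j) * y ^ (r - k - j)) j"
        by (simp add: mult_ac)
    qed (use that in auto)
    finally show ?thesis .
  qed
  then have "(\<Sum>k=0..r. smult (c k) ([:y, 1:] ^ (r - k)))
      = (\<Sum>k=0..r. \<Sum>i=k..r. monom (of_nat ((r - k) choose (i - k)) * y ^ (i - k) * c k) (r - i))"
    by (intro sum.cong) auto
  also have "\<dots> = (\<Sum>i=0..r. \<Sum>k=0..i. monom (of_nat ((r - k) choose (i - k)) * y ^ (i - k) * c k) (r - i))"
    by (rule sum_triangle_swap [symmetric])
  finally show ?thesis by (simp add: monom_sum)
qed

lemma monom_one_plus_sum_eq_sum:
  assumes "d 0 = 1"
  shows "monom 1 r + (\<Sum>i=1..r. monom (d i) (r - i)) = (\<Sum>i=0..r. monom (d i) (r - i))"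
  using assms by (simp add: sum.atLeast_Suc_atMost[of 0 r])

lemma pcompose_power: "pcompose (p ^ n) q = pcompose p q ^ n"
  by (induction n) (simp_all add: pcompose_1 pcompose_mult)

lemma pcompose_sum_smult_linear_power:
  fixes c :: "nat \<Rightarrow> 'a::comm_ring_1"
  shows "pcompose (\<Sum>k=0..r. smult (c k * h ^ k) ([:- y, 1:] ^ (r - k))) [:y, h:]
       = smult (h ^ r) (\<Sum>k=0..r. monom (c k) (r - k))"
proof -
  have "smult (c k * h ^ k) (monom (h ^ (r - k)) (r - k)) = smult (h ^ r) (monom (c k) (r - k))"
    if "k \<le> r" for k
    using that by (simp add: smult_monom mult_ac flip: power_add)
  moreover have "pcompose [:- y, 1:] [:y, h:] = monom h 1"
    by (simp add: pcompose_pCons monom_Suc monom_0)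
  ultimately show ?thesis
    by (simp add: pcompose_sum pcompose_smult pcompose_power monom_power smult_sum_right)
qed

lemma pcompose_linear_cancel:
  fixes p q :: "'a::field poly"
  assumes "h \<noteq> 0" and "pcompose p [:y, h:] = pcompose q [:y, h:]"
  shows "p = q"
proof -
  have inverse: "pcompose [:y, h:] [:- y / h, 1 / h:] = [:0, 1:]"
    using assms(1) by (simp add: pcompose_pCons field_simps)
  have "pcompose p (pcompose [:y, h:] [:- y / h, 1 / h:]) = pcompose q (pcompose [:y, h:] [:- y / h, 1 / h:])"
    by (simp only: pcompose_assoc assms(2))
  then show ?thesis
    by (simp only: inverse pcompose_idR)
qed

lemma interpolated_charpoly_eq:
  fixes \<sigma> :: "nat \<Rightarrow> 'a::comm_ring_1"
  assumes "\<sigma> 0 = 1"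
  shows "monom 1 r + (\<Sum>i=1..r. monom ((-1) ^ i *
             (\<Sum>k=0..i. of_nat ((r - k) choose (i - k)) * h ^ k * y ^ (i - k) * \<sigma> k)) (r - i))
       = (\<Sum>k=0..r. smult ((-1) ^ k * \<sigma> k * h ^ k) ([:- y, 1:] ^ (r - k)))"
proof -
  define d where
    "d i = (-1) ^ i * (\<Sum>k=0..i. of_nat ((r - k) choose (i - k)) * h ^ k * y ^ (i - k) * \<sigma> k)" for i
  have d_eq: "d i = (\<Sum>k=0..i. of_nat ((r - k) choose (i - k)) * (- y) ^ (i - k) * ((-1) ^ k * \<sigma> k * h ^ k))"
    for i
  proof -
    have "(-1) ^ i = (-1) ^ (i - k) * ((-1) ^ k :: 'a)" if "k \<le> i" for k
      using that by (simp flip: power_add)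
    then show ?thesis
      by (simp add: d_def sum_distrib_left power_minus[of y] mult_ac)
  qed
  have "d 0 = 1"
    using assms by (simp add: d_def)
  then have "monom 1 r + (\<Sum>i=1..r. monom (d i) (r - i)) = (\<Sum>i=0..r. monom (d i) (r - i))"
    by (rule monom_one_plus_sum_eq_sum)
  then show ?thesis
    by (simp add: d_def [symmetric] d_eq sum_smult_linear_power)
qed

lemma pcompose_interpolated_charpoly:
  fixes \<sigma> :: "nat \<Rightarrow> 'a::comm_ring_1"
  assumes "\<sigma> 0 = 1"
  shows "pcompose (monom 1 r + (\<Sum>i=1..r. monom ((-1) ^ i *
             (\<Sum>k=0..i. of_nat ((r - k) choose (i - k)) * h ^ k * y ^ (i - k) * \<sigma> k)) (r - i))) [:y, h:]
       = smult (h ^ r) (monom 1 r + (\<Sum>i=1..r. monom ((-1) ^ i * \<sigma> i) (r - i)))"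
proof -
  have "pcompose (monom 1 r + (\<Sum>i=1..r. monom ((-1) ^ i *
             (\<Sum>k=0..i. of_nat ((r - k) choose (i - k)) * h ^ k * y ^ (i - k) * \<sigma> k)) (r - i))) [:y, h:]
      = pcompose (\<Sum>k=0..r. smult ((-1) ^ k * \<sigma> k * h ^ k) ([:- y, 1:] ^ (r - k))) [:y, h:]"
    by (simp only: interpolated_charpoly_eq[of \<sigma> r h y, OF assms])
  also have "\<dots> = smult (h ^ r) (\<Sum>k=0..r. monom ((-1) ^ k * \<sigma> k) (r - k))"
    by (rule pcompose_sum_smult_linear_power)
  also have "\<dots> = smult (h ^ r) (monom 1 r + (\<Sum>i=1..r. monom ((-1) ^ i * \<sigma> i) (r - i)))"
    using monom_one_plus_sum_eq_sum[of "\<lambda>k. (-1) ^ k * \<sigma> k"] assms by simp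
  finally show ?thesis .
qed

lemma pcompose_prod_linear_factors:
  fixes h y :: "'a::comm_ring_1"
  shows "pcompose (\<Prod>j\<in>A. [:- (h * \<alpha> j + y), 1:]) [:y, h:] = smult (h ^ card A) (\<Prod>j\<in>A. [:- \<alpha> j, 1:])"
proof -
  have "pcompose (\<Prod>j\<in>A. [:- (h * \<alpha> j + y), 1:]) [:y, h:] = (\<Prod>j\<in>A. smult h [:- \<alpha> j, 1:])"
    unfolding pcompose_prod by (intro prod.cong) (simp_all add: pcompose_pCons algebra_simps)
  then show ?thesis
    by (simp only: prod_smult prod_constant)
qed

theorem theorem4:
  fixes R :: "'a::field set" and a :: "nat \<Rightarrow> 'a" and \<sigma> :: "nat \<Rightarrow> 'a"
    and \<alpha> :: "nat \<Rightarrow> 'a" and h y :: 'a and r :: nat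
  assumes "subring_of R"
    and "\<forall>n. a n \<in> R"
    and "\<forall>i\<in>{1..r}. \<sigma> i \<in> R"
    and "h \<in> R" and "y \<in> R" and "h \<noteq> 0" and "y \<noteq> 0"
    and "\<sigma> 0 = 1"
    and "lrs_charpoly (monom 1 r + (\<Sum>i=1..r. monom ((-1) ^ i * \<sigma> i) (r - i))) a"
    and "monom 1 r + (\<Sum>i=1..r. monom ((-1) ^ i * \<sigma> i) (r - i))
           = (\<Prod>j<r. [:- \<alpha> j, 1:])"
  shows "lrs_charpoly
           (monom 1 r + (\<Sum>i=1..r. monom ((-1) ^ i *
               (\<Sum>k=0..i. of_nat ((r - k) choose (i - k)) * h ^ k * y ^ (i - k) * \<sigma> k)) (r - i)))
           (binom_interp h y a)
       \<and> monom 1 r + (\<Sum>i=1..r. monom ((-1) ^ i *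
               (\<Sum>k=0..i. of_nat ((r - k) choose (i - k)) * h ^ k * y ^ (i - k) * \<sigma> k)) (r - i))
           = (\<Prod>j<r. [:- (h * \<alpha> j + y), 1:])"
    (is "lrs_charpoly ?G _ \<and> _")
proof
  let ?F = "monom 1 r + (\<Sum>i=1..r. monom ((-1) ^ i * \<sigma> i) (r - i))"
  have G_comp: "pcompose ?G [:y, h:] = smult (h ^ r) ?F"
    using assms(8) by (rule pcompose_interpolated_charpoly)
  show "lrs_charpoly ?G (binom_interp h y a)"
    using shift_eval_binom_interp_eq_0[OF lrs_charpoly_imp_shift_eval_eq_0[OF assms(9)] G_comp]
    by (rule lrs_charpolyI)
  have "pcompose (\<Prod>j<r. [:- (h * \<alpha> j + y), 1:]) [:y, h:] = smult (h ^ r) ?F"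
    using pcompose_prod_linear_factors[of h \<alpha> y "{..<r}"] by (simp only: assms(10) card_lessThan)
  with G_comp have "pcompose ?G [:y, h:] = pcompose (\<Prod>j<r. [:- (h * \<alpha> j + y), 1:]) [:y, h:]"
    by (simp only:)
  then show "?G = (\<Prod>j<r. [:- (h * \<alpha> j + y), 1:])"
    by (rule pcompose_linear_cancel[OF assms(6)])
qed

end
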